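(* For every $n\ge1$, the $\{\mathbf{3},\mathbf{2}+\mathbf{2}\}$-free naturally labelled posets on $[n]$ are in bijection with the set $\mathcal B_n$ of bicoloured permutations $\sigma$ of $[n]$ satisfying all of the following: (i) $\sigma(1)$ is blue; (ii) there is no $i$ with $\sigma(i),\sigma(i+1)$ both blue and $\sigma(i)<\sigma(i+1)$; (iii) there is no $i$ with $\sigma(i),\sigma(i+1)$ both red and $\sigma(i)>\sigma(i+1)$; (iv) there are no $i<j$ with $\sigma(i)$ blue, $\sigma(j)$ red and $\sigma(i)>\sigma(j)$.
   Context: A partial order $\preceq$ on $[n]$ is naturally labelled if $x\prec y$ implies $x<y$. It is $\mathbf{3}$-free if there are no $x\prec y\prec z$. It is $(\mathbf{2}+\mathbf{2})$-free if there are no distinct $i\prec j$, $k\prec\ell$ with each of $i,j$ incomparable to each of $k,\ell$. A bicoloured permutation of $[n]$ is a permutation $\sigma$ of $[n]$ in which each entry is coloured either blue or red. *)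

theory Defs
  imports "HOL-Combinatorics.Permutations"
begin

text \<open>A partial order on [n] = {1..n} is represented by its strict part R,
  a set of pairs (x,y) meaning x \<prec> y.\<close>

definition strict_poset_on :: "nat \<Rightarrow> (nat \<times> nat) set \<Rightarrow> bool" where
  "strict_poset_on n R \<longleftrightarrow> R \<subseteq> {1..n} \<times> {1..n} \<and> irrefl R \<and> trans R"

definition naturally_labelled :: "(nat \<times> nat) set \<Rightarrow> bool" where
  "naturally_labelled R \<longleftrightarrow> (\<forall>x y. (x, y) \<in> R \<longrightarrow> x < y)"

definition three_free :: "(nat \<times> nat) set \<Rightarrow> bool" where
  "three_free R \<longleftrightarrow> \<not> (\<exists>x y z. (x, y) \<in> R \<and> (y, z) \<in> R)"

definition incomparable :: "(nat \<times> nat) set \<Rightarrow> nat \<Rightarrow> nat \<Rightarrow> bool" where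
  "incomparable R x y \<longleftrightarrow> (x, y) \<notin> R \<and> (y, x) \<notin> R"

definition two_plus_two_free :: "(nat \<times> nat) set \<Rightarrow> bool" where
  "two_plus_two_free R \<longleftrightarrow> \<not> (\<exists>i j k l. distinct [i, j, k, l] \<and> (i, j) \<in> R \<and> (k, l) \<in> R \<and>
      incomparable R i k \<and> incomparable R i l \<and> incomparable R j k \<and> incomparable R j l)"

definition free_nl_posets :: "nat \<Rightarrow> (nat \<times> nat) set set" where
  "free_nl_posets n = {R. strict_poset_on n R \<and> naturally_labelled R \<and> three_free R \<and> two_plus_two_free R}"

text \<open>A bicoloured permutation of [n] is a pair (\<sigma>, Bl): \<sigma> permutes {1..n}
  (identity outside), and Bl \<subseteq> {1..n} is the set of entries (values) coloured blue;
  the remaining entries of {1..n} are red.  \<sigma> i is the entry at position i.\<close>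

definition bicoloured_perms :: "nat \<Rightarrow> ((nat \<Rightarrow> nat) \<times> nat set) set" where
  "bicoloured_perms n = {(\<sigma>, Bl). \<sigma> permutes {1..n} \<and> Bl \<subseteq> {1..n}}"

definition B_set :: "nat \<Rightarrow> ((nat \<Rightarrow> nat) \<times> nat set) set" where
  "B_set n = {(\<sigma>, Bl). (\<sigma>, Bl) \<in> bicoloured_perms n \<and>
      \<sigma> 1 \<in> Bl \<and>
      (\<forall>i. 1 \<le> i \<and> i + 1 \<le> n \<and> \<sigma> i \<in> Bl \<and> \<sigma> (i + 1) \<in> Bl \<longrightarrow> \<not> \<sigma> i < \<sigma> (i + 1)) \<and>
      (\<forall>i. 1 \<le> i \<and> i + 1 \<le> n \<and> \<sigma> i \<notin> Bl \<and> \<sigma> (i + 1) \<notin> Bl \<longrightarrow> \<not> \<sigma> i > \<sigma> (i + 1)) \<and>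
      (\<forall>i j. 1 \<le> i \<and> i < j \<and> j \<le> n \<and> \<sigma> i \<in> Bl \<and> \<sigma> j \<notin> Bl \<longrightarrow> \<not> \<sigma> i > \<sigma> j)}"

end

theory Submission
  imports Defs "HOL-Library.Product_Lexorder"
begin

text \<open>Colour an element of a {3, 2+2}-free poset red if something lies below it and blue otherwise.
  By 3-freeness every relation goes from a blue to a red element, and by (2+2)-freeness the down-sets
  of the red elements form a chain. Hence the poset is recovered from a word listing the reds by
  increasing down-set, with every blue element placed right after the reds that are not above it:
  x \<prec> y holds exactly when x is blue, y is red and x comes first. Breaking ties by decreasing labels
  within blue runs and increasing labels within red runs makes this word unique, and the words so
  obtained are exactly those of \<open>B_set n\<close>. Both directions of the bijection come down to the fact
  that the words in \<open>B_set n\<close> are precisely the permutations sorting [n] by the key \<open>sort_key\<close>.\<close>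

lemma strict_mono_on_atLeastAtMost_nat:
  fixes f :: "nat \<Rightarrow> 'a::order"
  assumes "\<And>i. 1 \<le> i \<Longrightarrow> Suc i \<le> n \<Longrightarrow> f i < f (Suc i)"
  shows "strict_mono_on {1..n} f"
proof (rule strict_mono_onI)
  fix i j :: nat assume "i \<in> {1..n}" "j \<in> {1..n}" "i < j"
  have "1 \<le> i \<longrightarrow> j \<le> n \<longrightarrow> f i < f j"
    using \<open>i < j\<close> by (induction i j rule: less_Suc_induct) (use assms in \<open>auto intro: less_trans\<close>)
  then show "f i < f j" using \<open>i \<in> {1..n}\<close> \<open>j \<in> {1..n}\<close> by simp
qed

lemma sorting_permutation_exists:
  fixes k :: "nat \<Rightarrow> 'a::linorder"
  assumes "inj_on k {1..n}"
  shows "\<exists>\<sigma>. \<sigma> permutes {1..n} \<and> strict_mono_on {1..n} (k \<circ> \<sigma>)"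
proof -
  interpret folding_insort_key "(\<le>)" "(<)" "{1..n}" k
    by unfold_locales (rule assms)
  define xs where "xs = linorder.sorted_key_list_of_set (\<le>) k {1..n}"
  have xs: "sorted_wrt (<) (map k xs)" "set xs = {1..n}" "length xs = n"
    using sorted_key_list_of_set_unique[of "{1..n}" xs] by (simp_all add: xs_def)
  define \<sigma> where "\<sigma> i = (if i \<in> {1..n} then xs ! (i - 1) else i)" for i
  have mono: "strict_mono_on {1..n} (k \<circ> \<sigma>)"
    using xs(1,3) by (intro strict_mono_onI) (auto simp: \<sigma>_def sorted_wrt_iff_nth_less)
  have "\<sigma> ` {1..n} = (!) xs ` {..<n}"
  proof -
    have "{..<n} = (\<lambda>i. i - 1) ` {1..n}"
      by (auto simp: image_iff intro!: bexI[where x = "Suc _"])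
    then show ?thesis by (auto simp: \<sigma>_def image_image)
  qed
  also have "\<dots> = {1..n}" using xs(2,3) by (auto simp: set_conv_nth)
  finally have "bij_betw \<sigma> {1..n} {1..n}"
    using strict_mono_on_imp_inj_on[OF mono] by (auto simp: bij_betw_def inj_on_imageI2)
  then have "\<sigma> permutes {1..n}" by (rule bij_imp_permutes) (auto simp: \<sigma>_def)
  with mono show ?thesis by blast
qed

lemma sorting_permutation_unique:
  fixes k :: "nat \<Rightarrow> 'a::linorder"
  assumes "inj_on k {1..n}"
    and "\<sigma> permutes {1..n}" "strict_mono_on {1..n} (k \<circ> \<sigma>)"
    and "\<tau> permutes {1..n}" "strict_mono_on {1..n} (k \<circ> \<tau>)"
  shows "\<sigma> = \<tau>"
proof
  have sorted: "sorted_wrt (<) (map (k \<circ> \<pi>) [1..<Suc n])"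
    if "strict_mono_on {1..n} (k \<circ> \<pi>)" for \<pi>
  proof (rule sorted_wrt_map_mono[OF sorted_wrt_upt])
    fix x y assume "x \<in> set [1..<Suc n]" "y \<in> set [1..<Suc n]" "x < y"
    then show "(k \<circ> \<pi>) x < (k \<circ> \<pi>) y" by (intro strict_mono_onD[OF that]) auto
  qed
  have image: "set (map (k \<circ> \<pi>) [1..<Suc n]) = k ` {1..n}" if "\<pi> permutes {1..n}" for \<pi>
    unfolding set_map set_upt atLeastLessThanSuc_atLeastAtMost image_comp[symmetric]
      permutes_image[OF that] ..
  have lists: "map (k \<circ> \<sigma>) [1..<Suc n] = map (k \<circ> \<tau>) [1..<Suc n]"
    by (rule strict_sorted_equal[OF sorted[OF assms(5)] sorted[OF assms(3)]])
      (simp only: image assms(2,4))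
  fix i show "\<sigma> i = \<tau> i"
  proof (cases "i \<in> {1..n}")
    case True
    have "map (k \<circ> \<pi>) [1..<Suc n] ! (i - 1) = k (\<pi> i)" for \<pi>
      using True by (subst nth_map_upt) auto
    then have "k (\<sigma> i) = k (\<tau> i)" using lists by metis
    then show ?thesis
      using inj_onD[OF assms(1)] True permutes_in_image[OF assms(2)] permutes_in_image[OF assms(4)] by blast
  next
    case False
    then show ?thesis using permutes_not_in[OF assms(2)] permutes_not_in[OF assms(4)] by simp
  qed
qed

lemma permutes_imageE:
  assumes "\<sigma> permutes A" "x \<in> A"
  obtains i where "i \<in> A" "x = \<sigma> i"
  using permutes_image[OF assms(1)] assms(2) by blast

definition sorting_perm :: "nat \<Rightarrow> (nat \<Rightarrow> 'a::linorder) \<Rightarrow> nat \<Rightarrow> nat" where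
  "sorting_perm n k = (SOME \<sigma>. \<sigma> permutes {1..n} \<and> strict_mono_on {1..n} (k \<circ> \<sigma>))"

lemma sorting_perm:
  assumes "inj_on k {1..n}"
  shows "sorting_perm n k permutes {1..n}" "strict_mono_on {1..n} (k \<circ> sorting_perm n k)"
  using someI_ex[OF sorting_permutation_exists[OF assms]] unfolding sorting_perm_def by blast+

lemma sorting_perm_unique:
  assumes "inj_on k {1..n}" "\<sigma> permutes {1..n}" "strict_mono_on {1..n} (k \<circ> \<sigma>)"
  shows "sorting_perm n k = \<sigma>"
  using sorting_permutation_unique[OF assms(1) sorting_perm[OF assms(1)] assms(2,3)] .

definition red :: "(nat \<times> nat) set \<Rightarrow> nat \<Rightarrow> bool" where
  "red R y \<longleftrightarrow> (\<exists>x. (x, y) \<in> R)"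

definition blues :: "nat \<Rightarrow> (nat \<times> nat) set \<Rightarrow> nat set" where
  "blues n R = {x \<in> {1..n}. \<not> red R x}"

definition below :: "(nat \<times> nat) set \<Rightarrow> nat \<Rightarrow> nat set" where
  "below R y = {x. (x, y) \<in> R}"

definition blue_rank :: "nat \<Rightarrow> (nat \<times> nat) set \<Rightarrow> nat \<Rightarrow> nat" where
  "blue_rank n R x = card {y \<in> {1..n}. red R y \<and> (x, y) \<notin> R}"

definition red_rank :: "nat \<Rightarrow> (nat \<times> nat) set \<Rightarrow> nat \<Rightarrow> nat" where
  "red_rank n R y = card {y' \<in> {1..n}. red R y' \<and> below R y' \<subset> below R y}"

text \<open>Even first components put a blue element right after the reds not above it, odd ones order
  the reds by their down-sets; the second components implement the tie-breaking of (ii) and (iii).\<close>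

definition sort_key :: "nat \<Rightarrow> (nat \<times> nat) set \<Rightarrow> nat \<Rightarrow> nat \<times> nat" where
  "sort_key n R x =
     (if red R x then (2 * red_rank n R x + 1, x) else (2 * blue_rank n R x, n - x))"

lemma free_nl_posetsD:
  assumes "R \<in> free_nl_posets n" and "(x, y) \<in> R"
  shows "x \<in> {1..n}" "y \<in> {1..n}" "x < y" "\<not> red R x" "(y, z) \<notin> R"
  using assms unfolding free_nl_posets_def strict_poset_on_def naturally_labelled_def
    three_free_def red_def by blast+

lemma red_in_atLeastAtMost: "R \<in> free_nl_posets n \<Longrightarrow> red R y \<Longrightarrow> y \<in> {1..n}"
  unfolding red_def using free_nl_posetsD(2) by blast

lemma below_chain:
  assumes free: "R \<in> free_nl_posets n"
  shows "below R y1 \<subseteq> below R y2 \<or> below R y2 \<subseteq> below R y1"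
proof (rule ccontr)
  assume "\<not> ?thesis"
  then obtain x1 x2 where rel: "(x1, y1) \<in> R" "(x2, y2) \<in> R" "(x1, y2) \<notin> R" "(x2, y1) \<notin> R"
    by (auto simp: below_def)
  have "\<And>a b c. (a, b) \<in> R \<Longrightarrow> (b, c) \<notin> R" using free_nl_posetsD(5)[OF free] .
  with rel have "distinct [x1, y1, x2, y2]"
    and "incomparable R x1 x2" "incomparable R x1 y2" "incomparable R y1 x2" "incomparable R y1 y2"
    unfolding incomparable_def by (auto dest: free_nl_posetsD(3)[OF free])
  with rel have "\<not> two_plus_two_free R" unfolding two_plus_two_free_def by blast
  with free show False by (simp add: free_nl_posets_def)
qed

lemma sort_key_less_if_related:
  assumes free: "R \<in> free_nl_posets n" and "(x, y) \<in> R"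
  shows "sort_key n R x < sort_key n R y"
proof -
  have colours: "\<not> red R x" "red R y" using assms free_nl_posetsD(4) by (auto simp: red_def)
  have "{y' \<in> {1..n}. red R y' \<and> (x, y') \<notin> R} \<subseteq> {y' \<in> {1..n}. red R y' \<and> below R y' \<subset> below R y}"
    using assms below_chain[OF free, of _ y] by (auto simp: below_def)
  then have "blue_rank n R x \<le> red_rank n R y"
    unfolding blue_rank_def red_rank_def by (intro card_mono) auto
  with colours show ?thesis by (simp add: sort_key_def)
qed

lemma sort_key_less_if_unrelated:
  assumes free: "R \<in> free_nl_posets n" and "\<not> red R x" "red R y" "(x, y) \<notin> R"
  shows "sort_key n R y < sort_key n R x"
proof -
  have "{y' \<in> {1..n}. red R y' \<and> below R y' \<subset> below R y} \<subset> {y' \<in> {1..n}. red R y' \<and> (x, y') \<notin> R}"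
    using assms red_in_atLeastAtMost[OF free] by (auto simp: below_def)
  then have "red_rank n R y < blue_rank n R x"
    unfolding blue_rank_def red_rank_def by (intro psubset_card_mono) auto
  with assms show ?thesis by (simp add: sort_key_def)
qed

lemma related_iff_sort_key_less:
  assumes free: "R \<in> free_nl_posets n"
  shows "(x, y) \<in> R \<longleftrightarrow> \<not> red R x \<and> red R y \<and> sort_key n R x < sort_key n R y"
proof
  assume "(x, y) \<in> R"
  then show "\<not> red R x \<and> red R y \<and> sort_key n R x < sort_key n R y"
    using sort_key_less_if_related[OF free] free_nl_posetsD(4)[OF free] by (auto simp: red_def)
next
  assume "\<not> red R x \<and> red R y \<and> sort_key n R x < sort_key n R y"
  then show "(x, y) \<in> R"
    using sort_key_less_if_unrelated[OF free, of x y] by (meson less_asym)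
qed

lemma inj_on_sort_key: "inj_on (sort_key n R) {1..n}"
  by (rule inj_onI) (auto simp: sort_key_def split: if_splits; presburger)

definition poset_of :: "nat \<Rightarrow> (nat \<Rightarrow> nat) \<Rightarrow> nat set \<Rightarrow> (nat \<times> nat) set" where
  "poset_of n \<sigma> Bl = {(\<sigma> i, \<sigma> j) | i j. 1 \<le> i \<and> i < j \<and> j \<le> n \<and> \<sigma> i \<in> Bl \<and> \<sigma> j \<notin> Bl}"

lemma mem_poset_of:
  assumes perm: "\<sigma> permutes {1..n}" and "i \<in> {1..n}" "j \<in> {1..n}"
  shows "(\<sigma> i, \<sigma> j) \<in> poset_of n \<sigma> Bl \<longleftrightarrow> i < j \<and> \<sigma> i \<in> Bl \<and> \<sigma> j \<notin> Bl"
  using assms permutes_inj[OF perm] unfolding poset_of_def by (auto dest: injD)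

lemma poset_of_subset: "\<sigma> permutes {1..n} \<Longrightarrow> poset_of n \<sigma> Bl \<subseteq> {1..n} \<times> {1..n}"
  unfolding poset_of_def using permutes_in_image by fastforce

lemma poset_ofE:
  assumes "(x, y) \<in> poset_of n \<sigma> Bl"
  obtains i j where "x = \<sigma> i" "y = \<sigma> j" "1 \<le> i" "i < j" "j \<le> n" "\<sigma> i \<in> Bl" "\<sigma> j \<notin> Bl"
  using assms unfolding poset_of_def by blast

lemma poset_of_colours: "(x, y) \<in> poset_of n \<sigma> Bl \<Longrightarrow> x \<in> Bl \<and> y \<notin> Bl"
  unfolding poset_of_def by blast

lemma poset_of_eqI:
  assumes perm: "\<sigma> permutes {1..n}" and "R \<subseteq> {1..n} \<times> {1..n}"
    and "\<And>i j. i \<in> {1..n} \<Longrightarrow> j \<in> {1..n} \<Longrightarrow> (\<sigma> i, \<sigma> j) \<in> R \<longleftrightarrow> i < j \<and> \<sigma> i \<in> Bl \<and> \<sigma> j \<notin> Bl"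
  shows "poset_of n \<sigma> Bl = R"
proof (rule set_eqI)
  fix p
  show "p \<in> poset_of n \<sigma> Bl \<longleftrightarrow> p \<in> R"
  proof (cases "p \<in> {1..n} \<times> {1..n}")
    case True
    then obtain x y where p: "p = (x, y)" "x \<in> {1..n}" "y \<in> {1..n}" by blast
    obtain i j where "i \<in> {1..n}" "j \<in> {1..n}" "x = \<sigma> i" "y = \<sigma> j"
      using permutes_imageE[OF perm p(2)] permutes_imageE[OF perm p(3)] by metis
    then show ?thesis using mem_poset_of[OF perm] assms(3) p(1) by simp
  next
    case False
    then show ?thesis using assms(2) poset_of_subset[OF perm] by blast
  qed
qed

lemma poset_of_consecutive_blues:
  assumes perm: "\<sigma> permutes {1..n}" and "1 \<le> i" "Suc i \<le> n" "\<sigma> i \<in> Bl" "\<sigma> (Suc i) \<in> Bl"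
  shows "(\<sigma> i, y) \<in> poset_of n \<sigma> Bl \<longleftrightarrow> (\<sigma> (Suc i), y) \<in> poset_of n \<sigma> Bl"
proof (cases "y \<in> {1..n}")
  case True
  then obtain m where "m \<in> {1..n}" "y = \<sigma> m" by (rule permutes_imageE[OF perm])
  then show ?thesis
    using mem_poset_of[OF perm, of i m Bl] mem_poset_of[OF perm, of "Suc i" m Bl] assms
    by (cases "m = Suc i") auto
next
  case False
  then show ?thesis using poset_of_subset[OF perm] by blast
qed

lemma poset_of_consecutive_reds:
  assumes perm: "\<sigma> permutes {1..n}" and "1 \<le> i" "Suc i \<le> n" "\<sigma> i \<notin> Bl" "\<sigma> (Suc i) \<notin> Bl"
  shows "below (poset_of n \<sigma> Bl) (\<sigma> i) = below (poset_of n \<sigma> Bl) (\<sigma> (Suc i))"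
proof -
  have "(x, \<sigma> i) \<in> poset_of n \<sigma> Bl \<longleftrightarrow> (x, \<sigma> (Suc i)) \<in> poset_of n \<sigma> Bl" for x
  proof (cases "x \<in> {1..n}")
    case True
    then obtain m where "m \<in> {1..n}" "x = \<sigma> m" by (rule permutes_imageE[OF perm])
    then show ?thesis
      using mem_poset_of[OF perm, of m i Bl] mem_poset_of[OF perm, of m "Suc i" Bl] assms
      by (cases "m = i") auto
  next
    case False
    then show ?thesis using poset_of_subset[OF perm] by blast
  qed
  then show ?thesis by (simp add: below_def)
qed

lemma blues_poset_of:
  assumes perm: "\<sigma> permutes {1..n}" and "Bl \<subseteq> {1..n}" "\<sigma> 1 \<in> Bl"
  shows "blues n (poset_of n \<sigma> Bl) = Bl"
proof -
  have "red (poset_of n \<sigma> Bl) x" if x: "x \<in> {1..n}" "x \<notin> Bl" for x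
  proof -
    obtain j where j: "j \<in> {1..n}" "x = \<sigma> j" using permutes_imageE[OF perm x(1)] .
    with assms x have "1 < j" by (cases "j = 1") auto
    then have "(\<sigma> 1, x) \<in> poset_of n \<sigma> Bl" using mem_poset_of[OF perm, of 1 j] j assms x by auto
    then show ?thesis by (auto simp: red_def)
  qed
  then show ?thesis using assms(2) poset_of_colours unfolding blues_def red_def by blast
qed

lemma B_setD:
  assumes "(\<sigma>, Bl) \<in> B_set n"
  shows "\<sigma> permutes {1..n}" "Bl \<subseteq> {1..n}" "\<sigma> 1 \<in> Bl"
    and "1 \<le> i \<Longrightarrow> Suc i \<le> n \<Longrightarrow> \<sigma> i \<in> Bl \<Longrightarrow> \<sigma> (Suc i) \<in> Bl \<Longrightarrow> \<sigma> (Suc i) < \<sigma> i"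
    and "1 \<le> i \<Longrightarrow> Suc i \<le> n \<Longrightarrow> \<sigma> i \<notin> Bl \<Longrightarrow> \<sigma> (Suc i) \<notin> Bl \<Longrightarrow> \<sigma> i < \<sigma> (Suc i)"
    and "1 \<le> i \<Longrightarrow> i < j \<Longrightarrow> j \<le> n \<Longrightarrow> \<sigma> i \<in> Bl \<Longrightarrow> \<sigma> j \<notin> Bl \<Longrightarrow> \<sigma> i < \<sigma> j"
proof -
  show perm: "\<sigma> permutes {1..n}" and "Bl \<subseteq> {1..n}" "\<sigma> 1 \<in> Bl"
    using assms by (simp_all add: B_set_def bicoloured_perms_def)
  have distinct: "\<sigma> i \<noteq> \<sigma> j" if "i \<noteq> j" for i j
    using permutes_inj[OF perm] that by (auto dest: injD)
  show "1 \<le> i \<Longrightarrow> Suc i \<le> n \<Longrightarrow> \<sigma> i \<in> Bl \<Longrightarrow> \<sigma> (Suc i) \<in> Bl \<Longrightarrow> \<sigma> (Suc i) < \<sigma> i"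
    and "1 \<le> i \<Longrightarrow> Suc i \<le> n \<Longrightarrow> \<sigma> i \<notin> Bl \<Longrightarrow> \<sigma> (Suc i) \<notin> Bl \<Longrightarrow> \<sigma> i < \<sigma> (Suc i)"
    using assms distinct[of i "Suc i"] by (auto simp: B_set_def)
  show "1 \<le> i \<Longrightarrow> i < j \<Longrightarrow> j \<le> n \<Longrightarrow> \<sigma> i \<in> Bl \<Longrightarrow> \<sigma> j \<notin> Bl \<Longrightarrow> \<sigma> i < \<sigma> j"
    using assms distinct[of i j] unfolding B_set_def by (auto simp: nat_neq_iff)
qed

lemma poset_of_in_free_nl_posets:
  assumes B: "(\<sigma>, Bl) \<in> B_set n"
  shows "poset_of n \<sigma> Bl \<in> free_nl_posets n"
proof -
  let ?R = "poset_of n \<sigma> Bl"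
  note perm = B_setD(1)[OF B]
  have "strict_poset_on n ?R"
    unfolding strict_poset_on_def irrefl_def trans_def
    using poset_of_subset[OF perm] poset_of_colours by blast
  moreover have "naturally_labelled ?R"
    unfolding naturally_labelled_def by (auto elim!: poset_ofE intro: B_setD(6)[OF B])
  moreover have "three_free ?R"
    unfolding three_free_def using poset_of_colours by blast
  moreover have "two_plus_two_free ?R"
    unfolding two_plus_two_free_def incomparable_def
  proof clarify
    fix x y u v
    assume "(x, y) \<in> ?R" "(u, v) \<in> ?R" "(x, v) \<notin> ?R" "(u, y) \<notin> ?R"
    moreover obtain a b where "x = \<sigma> a" "y = \<sigma> b" "1 \<le> a" "a < b" "b \<le> n" "\<sigma> a \<in> Bl" "\<sigma> b \<notin> Bl"
      using \<open>(x, y) \<in> ?R\<close> by (rule poset_ofE)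
    moreover obtain c d where "u = \<sigma> c" "v = \<sigma> d" "1 \<le> c" "c < d" "d \<le> n" "\<sigma> c \<in> Bl" "\<sigma> d \<notin> Bl"
      using \<open>(u, v) \<in> ?R\<close> by (rule poset_ofE)
    ultimately have "d \<le> a" "b \<le> c" using mem_poset_of[OF perm] by auto
    with \<open>a < b\<close> \<open>c < d\<close> show False by linarith
  qed
  ultimately show ?thesis by (simp add: free_nl_posets_def)
qed

lemma strict_mono_sort_key_poset_of:
  assumes B: "(\<sigma>, Bl) \<in> B_set n"
  shows "strict_mono_on {1..n} (sort_key n (poset_of n \<sigma> Bl) \<circ> \<sigma>)"
proof (rule strict_mono_on_atLeastAtMost_nat)
  let ?R = "poset_of n \<sigma> Bl"
  fix i assume i: "1 \<le> i" "Suc i \<le> n"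
  note perm = B_setD(1)[OF B]
  have free: "?R \<in> free_nl_posets n" using poset_of_in_free_nl_posets[OF B] .
  have red_iff: "red ?R (\<sigma> m) \<longleftrightarrow> \<sigma> m \<notin> Bl" if "m \<in> {1..n}" for m
  proof -
    have "\<sigma> m \<in> {1..n}" using permutes_in_image[OF perm] that by simp
    then have "\<sigma> m \<in> blues n ?R \<longleftrightarrow> \<not> red ?R (\<sigma> m)" by (simp add: blues_def)
    then show ?thesis using blues_poset_of[OF perm B_setD(2,3)[OF B]] by simp
  qed
  have positions: "i \<in> {1..n}" "Suc i \<in> {1..n}" using i by auto
  consider "\<sigma> i \<in> Bl" "\<sigma> (Suc i) \<in> Bl" | "\<sigma> i \<notin> Bl" "\<sigma> (Suc i) \<notin> Bl"
    | "\<sigma> i \<in> Bl" "\<sigma> (Suc i) \<notin> Bl" | "\<sigma> i \<notin> Bl" "\<sigma> (Suc i) \<in> Bl" by blast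
  then show "(sort_key n ?R \<circ> \<sigma>) i < (sort_key n ?R \<circ> \<sigma>) (Suc i)"
  proof cases
    case 1
    then have "blue_rank n ?R (\<sigma> i) = blue_rank n ?R (\<sigma> (Suc i))"
      using poset_of_consecutive_blues[OF perm i] by (simp add: blue_rank_def)
    moreover have "\<sigma> (Suc i) < \<sigma> i" using B_setD(4)[OF B i 1] .
    moreover have "\<sigma> i \<le> n" using permutes_in_image[OF perm, of i] positions(1) by simp
    ultimately show ?thesis using 1 red_iff positions by (simp add: sort_key_def)
  next
    case 2
    then have "red_rank n ?R (\<sigma> i) = red_rank n ?R (\<sigma> (Suc i))"
      using poset_of_consecutive_reds[OF perm i] by (simp add: red_rank_def)
    moreover have "\<sigma> i < \<sigma> (Suc i)" using B_setD(5)[OF B i 2] .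
    ultimately show ?thesis using 2 red_iff positions by (simp add: sort_key_def)
  next
    case 3
    then have "(\<sigma> i, \<sigma> (Suc i)) \<in> ?R" using mem_poset_of[OF perm positions] by simp
    then show ?thesis using sort_key_less_if_related[OF free] by simp
  next
    case 4
    then have "(\<sigma> (Suc i), \<sigma> i) \<notin> ?R" using mem_poset_of[OF perm positions(2,1)] by simp
    then show ?thesis using sort_key_less_if_unrelated[OF free] 4 red_iff positions by simp
  qed
qed

lemma sorting_perm_poset_of:
  assumes B: "(\<sigma>, Bl) \<in> B_set n"
  shows "sorting_perm n (sort_key n (poset_of n \<sigma> Bl)) = \<sigma>"
  using sorting_perm_unique[OF inj_on_sort_key B_setD(1)[OF B] strict_mono_sort_key_poset_of[OF B]] .

context
  fixes n :: nat and R :: "(nat \<times> nat) set" and \<sigma> :: "nat \<Rightarrow> nat"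
  assumes free: "R \<in> free_nl_posets n"
    and perm: "\<sigma> permutes {1..n}"
    and sorted: "strict_mono_on {1..n} (sort_key n R \<circ> \<sigma>)"
begin

lemma related_iff_positions_less:
  assumes "i \<in> {1..n}" "j \<in> {1..n}"
  shows "(\<sigma> i, \<sigma> j) \<in> R \<longleftrightarrow> i < j \<and> \<sigma> i \<in> blues n R \<and> \<sigma> j \<notin> blues n R"
  using related_iff_sort_key_less[OF free] strict_mono_on_less[OF sorted assms]
    permutes_in_image[OF perm] assms by (auto simp: blues_def)

lemma poset_of_sorting_permutation: "poset_of n \<sigma> (blues n R) = R"
  using perm free_nl_posetsD(1,2)[OF free] related_iff_positions_less
  by (intro poset_of_eqI) auto

lemma first_entry_blue:
  assumes "n \<ge> 1"
  shows "\<sigma> 1 \<in> blues n R"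
proof (rule ccontr)
  assume "\<sigma> 1 \<notin> blues n R"
  then obtain x where "(x, \<sigma> 1) \<in> R"
    using permutes_in_image[OF perm, of 1] assms by (auto simp: blues_def red_def)
  moreover obtain m where "m \<in> {1..n}" "x = \<sigma> m"
    using permutes_imageE[OF perm free_nl_posetsD(1)[OF free \<open>(x, \<sigma> 1) \<in> R\<close>]] .
  ultimately show False using related_iff_positions_less assms by auto
qed

lemma sorting_permutation_in_B_set:
  assumes "n \<ge> 1"
  shows "(\<sigma>, blues n R) \<in> B_set n"
proof -
  let ?Bl = "blues n R"
  have blue_iff: "\<sigma> m \<in> ?Bl \<longleftrightarrow> \<not> red R (\<sigma> m)" if "m \<in> {1..n}" for m
    using permutes_in_image[OF perm, of m] that by (simp add: blues_def)
  have key_less: "sort_key n R (\<sigma> i) < sort_key n R (\<sigma> (Suc i))" if "1 \<le> i" "Suc i \<le> n" for i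
    using strict_mono_onD[OF sorted] that by simp
  have "\<sigma> 1 \<in> ?Bl" using first_entry_blue[OF assms] .
  moreover have "\<not> \<sigma> i < \<sigma> (Suc i)"
    if "1 \<le> i" "Suc i \<le> n" "\<sigma> i \<in> ?Bl" "\<sigma> (Suc i) \<in> ?Bl" for i
  proof -
    have "blue_rank n R (\<sigma> i) = blue_rank n R (\<sigma> (Suc i))"
      using poset_of_consecutive_blues[OF perm that] by (simp add: poset_of_sorting_permutation blue_rank_def)
    then show ?thesis using key_less[OF that(1,2)] that by (auto simp: sort_key_def blues_def)
  qed
  moreover have "\<not> \<sigma> i > \<sigma> (Suc i)"
    if "1 \<le> i" "Suc i \<le> n" "\<sigma> i \<notin> ?Bl" "\<sigma> (Suc i) \<notin> ?Bl" for i
  proof -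
    have "red_rank n R (\<sigma> i) = red_rank n R (\<sigma> (Suc i))"
      using poset_of_consecutive_reds[OF perm that] by (simp add: poset_of_sorting_permutation red_rank_def)
    then show ?thesis using key_less[OF that(1,2)] that blue_iff by (auto simp: sort_key_def)
  qed
  moreover have "\<not> \<sigma> i > \<sigma> j" if "1 \<le> i" "i < j" "j \<le> n" "\<sigma> i \<in> ?Bl" "\<sigma> j \<notin> ?Bl" for i j
  proof -
    have "(\<sigma> i, \<sigma> j) \<in> R" using related_iff_positions_less[of i j] that by simp
    from free_nl_posetsD(3)[OF free this] show ?thesis by simp
  qed
  ultimately show ?thesis
    using perm by (auto simp: B_set_def bicoloured_perms_def blues_def)
qed

end

theorem proposition8:
  fixes n :: nat
  assumes "n \<ge> 1"
  shows "\<exists>f. bij_betw f (free_nl_posets n) (B_set n)"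
proof -
  let ?word = "\<lambda>R. (sorting_perm n (sort_key n R), blues n R)"
  note sorting = sorting_perm[OF inj_on_sort_key]
  have "bij_betw ?word (free_nl_posets n) (B_set n)"
  proof (rule bij_betw_byWitness[where f' = "\<lambda>(\<sigma>, Bl). poset_of n \<sigma> Bl"])
    show "\<forall>R \<in> free_nl_posets n. (\<lambda>(\<sigma>, Bl). poset_of n \<sigma> Bl) (?word R) = R"
      using poset_of_sorting_permutation[OF _ sorting] by simp
    show "\<forall>p \<in> B_set n. ?word ((\<lambda>(\<sigma>, Bl). poset_of n \<sigma> Bl) p) = p"
      by (auto simp: sorting_perm_poset_of blues_poset_of[OF B_setD(1-3)])
    show "?word ` free_nl_posets n \<subseteq> B_set n"
      using sorting_permutation_in_B_set[OF _ sorting assms] by blast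
    show "(\<lambda>(\<sigma>, Bl). poset_of n \<sigma> Bl) ` B_set n \<subseteq> free_nl_posets n"
      using poset_of_in_free_nl_posets by auto
  qed
  then show ?thesis by blast
qed

end
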